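(* Let $\sigma\in\{+1,-1\}$, $k\ge1$, and let $a_0,a_1,\dots,a_k\in\mathbb Z^m$ be such that $a_0\notin\{0,a_1,\dots,a_k\}$ and $a_1,\dots,a_k$ are linearly independent. Suppose $n_0,n_1,\dots,n_k\in\mathbb Z$ with $n_0\ne0$ satisfy $\sum_{i=0}^kn_ia_i=0$. Then $$\sum_{i=0}^kn_i\,C(a_i,\sigma)\ne0\quad\text{in }\mathbb Z[e_1,\dots,e_m].$$ Equivalently: in a possible combinatorial graph whose vertices of a given color, other than the root $(0,+)$, span a lattice of rank $k$, either there are exactly $k$ such vertices or the graph produces an avoidable resonance.
   Context: Identify $a=\sum_ia_ie_i\in\mathbb Z^m$ with a linear form in the polynomial ring $\mathbb Z[e_1,\dots,e_m]$; $a^2$ is its square in this ring and $a^{(2)}:=\sum_ia_ie_i^2$. For $\sigma=\pm1$ set $C(a,\sigma)=\frac{\sigma}{2}(a^2+a^{(2)})$. (A vertex $(a,\sigma)$ of a graph in $\mathbb Z^m\times\{\pm\}$ has color black if $\sigma=+$, red if $\sigma=-$; a relation $\sum n_aa=0$ among vertices produces an avoidable resonance if $\sum n_aC(a,\sigma_a)\ne0$.) *)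

theory Defs
  imports Complex_Main "HOL-Library.Poly_Mapping"
begin

text \<open>Polynomials in the variables e_i (i ranging over the finite index type 'm,
  so m = CARD('m)) are modelled as finitely supported maps from monomials
  ('m =>0 nat) to coefficients. We take rational coefficients so that the
  factor 1/2 in C can be written literally; Z[e] embeds into Q[e].\<close>

type_synonym 'm mpoly = "('m \<Rightarrow>\<^sub>0 nat) \<Rightarrow>\<^sub>0 rat"

definition var :: "'m \<Rightarrow> 'm mpoly" where
  "var i = Poly_Mapping.single (Poly_Mapping.single i 1) 1"

definition const :: "rat \<Rightarrow> 'm mpoly" where
  "const c = Poly_Mapping.single 0 c"

definition linform :: "('m::finite \<Rightarrow> int) \<Rightarrow> 'm mpoly" where
  "linform a = (\<Sum>i\<in>UNIV. const (of_int (a i)) * var i)"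

definition sqform :: "('m::finite \<Rightarrow> int) \<Rightarrow> 'm mpoly" where
  "sqform a = (\<Sum>i\<in>UNIV. const (of_int (a i)) * (var i * var i))"

definition C :: "('m::finite \<Rightarrow> int) \<Rightarrow> int \<Rightarrow> 'm mpoly" where
  "C a \<sigma> = const (of_int \<sigma> / 2) * (linform a * linform a + sqform a)"

definition lin_indep_vecs :: "nat \<Rightarrow> (nat \<Rightarrow> 'm \<Rightarrow> int) \<Rightarrow> bool" where
  "lin_indep_vecs k a \<longleftrightarrow>
     (\<forall>c :: nat \<Rightarrow> int. (\<forall>j. (\<Sum>i\<in>{1..k}. c i * a i j) = 0) \<longrightarrow> (\<forall>i\<in>{1..k}. c i = 0))"

end

theory Submission imports Defs begin

(* Suppose  \<Sum>i n_i C(a_i,\<sigma>) = 0.  The coefficient of the degree-two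
   monomial e_p e_q in C(a,\<sigma>) is \<sigma> a_p a_q for p \<noteq> q and \<sigma>/2 (a_p^2 + a_p) for p = q.
   Since \<Sum>i n_i a_i = 0, the linear contributions cancel on the diagonal, so comparing
   coefficients gives the vanishing of the second moments  \<Sum>i n_i a_ip a_iq = 0.
   Subtracting a_0j times the linear relation from the moment relation eliminates a_0:
   \<Sum>_{i\<ge>1} n_i (a_ij - a_0j) a_i = 0, and linear independence of a_1..a_k forces
   n_i (a_i - a_0) = 0.  As a_i \<noteq> a_0, all n_i (i \<ge> 1) vanish, so n_0 a_0 = 0,
   contradicting n_0 \<noteq> 0 and a_0 \<noteq> 0.
   The file first computes coefficients of C at degree-two monomials, then derives the
   moment relation, then does the (purely integer) linear-algebra step, and finally
   combines them. *)

definition mono2 :: "'m \<Rightarrow> 'm \<Rightarrow> ('m \<Rightarrow>\<^sub>0 nat)" where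
  "mono2 p q = Poly_Mapping.single p 1 + Poly_Mapping.single q 1"

lemma mono2_eq_iff: "mono2 i j = mono2 p q \<longleftrightarrow> (i = p \<and> j = q) \<or> (i = q \<and> j = p)"
proof
  assume h: "mono2 i j = mono2 p q"
  have e: "(if i = x then 1 else 0) + (if j = x then 1 else 0)
         = (if p = x then 1 else 0) + ((if q = x then 1 else 0) :: nat)" for x
    using arg_cong[OF h, of "\<lambda>m. Poly_Mapping.lookup m x"]
    by (simp only: mono2_def lookup_add lookup_single when_def)
  show "(i = p \<and> j = q) \<or> (i = q \<and> j = p)"
  proof (cases "i = j")
    case True
    then show ?thesis using e[of i] by (auto split: if_splits)
  next
    case False
    have "(p = i \<and> q \<noteq> i) \<or> (p \<noteq> i \<and> q = i)" using e[of i] False by (auto split: if_splits)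
    moreover have "(p = j \<and> q \<noteq> j) \<or> (p \<noteq> j \<and> q = j)" using e[of j] False by (auto split: if_splits)
    ultimately show ?thesis using False by blast
  qed
qed (auto simp: mono2_def add.commute)

lemma lookup_const_mult: "Poly_Mapping.lookup (const c * p) m = c * Poly_Mapping.lookup p m"
  unfolding const_def mult_map_scale_conv_mult[symmetric]
  by transfer (simp add: when_def)

lemma linform_square:
  "linform a * linform a = (\<Sum>i\<in>UNIV. \<Sum>j\<in>UNIV. Poly_Mapping.single (mono2 i j) (of_int (a i * a j)))"
proof -
  have linform_eq: "linform a = (\<Sum>i\<in>UNIV. Poly_Mapping.single (Poly_Mapping.single i 1) (of_int (a i)))"
    unfolding linform_def const_def var_def by (simp add: mult_single del: single_of_int)
  show ?thesis
    unfolding linform_eq sum_product by (simp add: mult_single mono2_def del: single_of_int)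
qed

lemma sqform_eq: "sqform a = (\<Sum>i\<in>UNIV. Poly_Mapping.single (mono2 i i) (of_int (a i)))"
  unfolding sqform_def const_def var_def mono2_def by (simp add: mult_single del: single_of_int)

lemma sum_unordered_pair:
  fixes f :: "'m::finite \<Rightarrow> 'm \<Rightarrow> rat"
  shows "(\<Sum>i\<in>UNIV. \<Sum>j\<in>UNIV. f i j when (i = p \<and> j = q) \<or> (i = q \<and> j = p))
       = (if p = q then f p p else f p q + f q p)"
proof (cases "p = q")
  case True
  then have "(\<Sum>j\<in>UNIV. f i j when (i = p \<and> j = q) \<or> (i = q \<and> j = p))
      = (if i = p then f p p else 0)" for i
    by (cases "i = p") (simp_all add: when_def)
  with True show ?thesis by simp
next
  case False
  then have "(\<Sum>j\<in>UNIV. f i j when (i = p \<and> j = q) \<or> (i = q \<and> j = p))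
      = (if i = p then f p q else 0) + (if i = q then f q p else 0)" for i
    by (cases "i = p"; cases "i = q") (simp_all add: when_def)
  with False show ?thesis by (simp add: sum.distrib)
qed

lemma coeff_C:
  fixes a :: "'m::finite \<Rightarrow> int" and p q :: 'm
  shows "Poly_Mapping.lookup (C a \<sigma>) (mono2 p q)
     = of_int \<sigma> / 2 * of_int (if p = q then a p * a p + a p else 2 * a p * a q)"
proof -
  have sq: "Poly_Mapping.lookup (linform a * linform a) (mono2 p q)
          = of_int (if p = q then a p * a p else 2 * a p * a q)"
    unfolding linform_square lookup_sum lookup_single mono2_eq_iff sum_unordered_pair
    by simp
  have lin: "Poly_Mapping.lookup (sqform a) (mono2 p q) = of_int (if p = q then a p else 0)"
  proof (cases "p = q")
    case True
    then show ?thesis by (simp add: sqform_eq lookup_sum lookup_single mono2_eq_iff when_def)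
  next
    case False
    then have "mono2 i i \<noteq> mono2 p q" for i by (auto simp: mono2_eq_iff)
    then show ?thesis using False by (simp add: sqform_eq lookup_sum lookup_single)
  qed
  show ?thesis
    unfolding C_def lookup_const_mult lookup_add sq lin by simp
qed

lemma second_moments_vanish:
  fixes a :: "nat \<Rightarrow> ('m::finite \<Rightarrow> int)"
  assumes "\<sigma> \<noteq> 0"
    and lin: "(\<Sum>i\<in>I. n i * a i p) = 0"
    and zero: "(\<Sum>i\<in>I. const (of_int (n i)) * C (a i) \<sigma>) = 0"
  shows "(\<Sum>i\<in>I. n i * a i p * a i q) = 0"
proof -
  define coeff where
    "coeff i = (if p = q then a i p * a i p + a i p else 2 * a i p * a i q)" for i
  have "0 = Poly_Mapping.lookup (\<Sum>i\<in>I. const (of_int (n i)) * C (a i) \<sigma>) (mono2 p q)"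
    using zero by simp
  also have "\<dots> = (\<Sum>i\<in>I. of_int (n i) * (of_int \<sigma> / 2 * of_int (coeff i)))"
    unfolding lookup_sum lookup_const_mult coeff_C coeff_def ..
  also have "\<dots> = of_int \<sigma> / 2 * of_int (\<Sum>i\<in>I. n i * coeff i)"
    unfolding of_int_sum sum_distrib_left by (simp add: mult.left_commute)
  finally have "(\<Sum>i\<in>I. n i * coeff i) = 0"
    using \<open>\<sigma> \<noteq> 0\<close> by (simp del: of_int_sum)
  moreover have "(\<Sum>i\<in>I. n i * coeff i) = (if p = q then 1 else 2) * (\<Sum>i\<in>I. n i * a i p * a i q)"
  proof (cases "p = q")
    case True
    have "(\<Sum>i\<in>I. n i * coeff i) = (\<Sum>i\<in>I. n i * a i p * a i q) + (\<Sum>i\<in>I. n i * a i p)"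
      unfolding coeff_def sum.distrib[symmetric] using True by (simp add: distrib_left mult.assoc)
    then show ?thesis using lin True by simp
  next
    case False
    have "(\<Sum>i\<in>I. n i * coeff i) = (\<Sum>i\<in>I. 2 * (n i * a i p * a i q))"
      unfolding coeff_def using False by (simp add: mult.left_commute mult.assoc)
    then show ?thesis using False by (simp add: sum_distrib_left)
  qed
  ultimately show ?thesis by (simp split: if_splits)
qed

lemma moment_relation_collapses:
  fixes a :: "nat \<Rightarrow> ('m \<Rightarrow> int)"
  assumes indep: "lin_indep_vecs k a"
    and lin: "\<And>l. (\<Sum>i\<in>{0..k}. n i * a i l) = 0"
    and quad: "\<And>j l. (\<Sum>i\<in>{0..k}. n i * a i j * a i l) = 0"
    and i: "i \<in> {1..k}" and "n i \<noteq> 0"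
  shows "a i = a 0"
proof
  fix j
  have split0: "(\<Sum>i\<in>{0..k}. f i) = f 0 + (\<Sum>i\<in>{1..k}. f i)" for f :: "nat \<Rightarrow> int"
    by (simp add: sum.atLeast_Suc_atMost)
  have "(\<Sum>i\<in>{1..k}. n i * (a i j - a 0 j) * a i l) = 0" for l
  proof -
    have "(\<Sum>i\<in>{1..k}. n i * (a i j - a 0 j) * a i l)
        = (\<Sum>i\<in>{1..k}. n i * a i j * a i l) - a 0 j * (\<Sum>i\<in>{1..k}. n i * a i l)"
      by (simp add: sum_subtractf sum_distrib_left algebra_simps)
    also have "\<dots> = - (n 0 * a 0 j * a 0 l) + a 0 j * (n 0 * a 0 l)"
      using quad[of j l] lin[of l] unfolding split0 by (simp add: add_eq_0_iff)
    finally show ?thesis by simp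
  qed
  then have "n i * (a i j - a 0 j) = 0"
    using indep[unfolded lin_indep_vecs_def, rule_format, of "\<lambda>i. n i * (a i j - a 0 j)"] i
    by blast
  then show "a i j = a 0 j" using \<open>n i \<noteq> 0\<close> by simp
qed

theorem mainTheorem9:
  fixes a :: "nat \<Rightarrow> ('m::finite \<Rightarrow> int)" and n :: "nat \<Rightarrow> int"
    and \<sigma> :: int and k :: nat
  assumes "\<sigma> = 1 \<or> \<sigma> = -1"
    and "k \<ge> 1"
    and "a 0 \<noteq> (\<lambda>_. 0)"
    and "\<forall>i\<in>{1..k}. a 0 \<noteq> a i"
    and "lin_indep_vecs k a"
    and "n 0 \<noteq> 0"
    and "\<forall>j. (\<Sum>i\<in>{0..k}. n i * a i j) = 0"
  shows "(\<Sum>i\<in>{0..k}. const (of_int (n i)) * C (a i) \<sigma>) \<noteq> 0"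
proof
  assume zero: "(\<Sum>i\<in>{0..k}. const (of_int (n i)) * C (a i) \<sigma>) = 0"
  have lin: "(\<Sum>i\<in>{0..k}. n i * a i j) = 0" for j
    using assms(7) by blast
  have quad: "(\<Sum>i\<in>{0..k}. n i * a i j * a i l) = 0" for j l
    using second_moments_vanish[OF _ lin zero] assms(1) by auto
  have "n i = 0" if "i \<in> {1..k}" for i
    using moment_relation_collapses[OF assms(5) lin quad that] assms(4) that by fastforce
  then have "n 0 * a 0 j = 0" for j
    using lin[of j] by (simp add: sum.atLeast_Suc_atMost)
  then have "a 0 = (\<lambda>_. 0)"
    using assms(6) by auto
  with assms(3) show False by contradiction
qed

end
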